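(* Suppose Assumptions A1, A2 (SDSD) and A3 hold for the steady state $(x^s,u^s)$ and $\gamma\in(0,1)$. Define the undiscounted stage cost $\tilde L^\gamma(x,u):=L(x,u)+(\gamma-1)V_\star^\gamma(f(x,u))$ and the undiscounted optimal value $\tilde V_\star^\gamma(x_0):=\min_{\pi\in\Pi}\sum_{k=0}^\infty\tilde L^\gamma(x_k^\pi,\pi(x_k^\pi))$. Then for all $x_0\in\mathbb{X}_0$ the discounted optimal policy $\pi_\star^\gamma$ is an optimal policy for the undiscounted problem with stage cost $\tilde L^\gamma$ (i.e. $\tilde\pi_\star^\gamma=\pi_\star^\gamma$), and $\tilde V_\star^\gamma(x_0)=V_\star^\gamma(x_0)$.
   Context: Setting: discrete-time system $x_+=f(x,u)$ with $x\in\mathbb{R}^{n_x}$, $u\in\mathbb{R}^{n_u}$, stage cost $L(x,u)$, constraint set $\mathbb{Z}:=\{(x,u): h(x,u)\le 0\}$, with the convention $L(x,u)=\infty$ for $(x,u)\notin\mathbb{Z}$, and discount factor $\gamma\in(0,1)$. For a policy $\pi$ the closed-loop trajectory is $x_{k+1}^\pi=f(x_k^\pi,\pi(x_k^\pi))$, $x_0^\pi=x_0$. $\mathbb{X}_0:=\{x_0:\exists\pi \text{ with } h(x_k^\pi,\pi(x_k^\pi))\le0\ \forall k\ge0\}$ and $\Pi:=\{\pi: h(x_k^\pi,\pi(x_k^\pi))\le 0\ \forall x_0\in\mathbb{X}_0,\forall k\ge 0\}$. The optimal value function is $V_\star^\gamma(x_0):=\min_{\pi\in\Pi}\sum_{k=0}^\infty\gamma^kL(x_k^\pi,\pi(x_k^\pi))$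 and $\pi_\star^\gamma$ denotes an optimal policy; it satisfies the Bellman equation $V_\star^\gamma(x)=\min_{\pi\in\Pi}L(x,\pi(x))+\gamma V_\star^\gamma(f(x,\pi(x)))$. $(x^s,u^s)$ is a steady state, $x^s=f(x^s,u^s)$, normalized so that $L(x^s,u^s)=0$. Assumption A1: $\mathbb{Z}$ and $\mathbb{X}_0$ are compact and $|L(x,u)|<\infty$ for all $(x,u)\in\mathbb{Z}$. Assumption A2 (Strong Discounted Strict Dissipativity, SDSD): there exist a function $\lambda$, continuous at $x^s$, bounded on bounded sets, with $\lambda(x^s)=0$, and $\rho\in\mathcal{K}$ such that for all $(x,u)\in\mathbb{Z}$: (i) $L(x,u)+\lambda(x)-\gamma\lambda(f(x,u))\ge\rho(\|x-x^s\|)$; (ii) $L(x,u)+\lambda(x)-\lambda(f(x,u))+(\gamma-1)V_\star^\gamma(f(x,u))\ge\rho(\|x-x^s\|)$. Assumption A3: $V_\star^\gamma$ is continuous at $x^s$ and bounded on $\mathbb{X}_0$. $\mathcal{K}$ denotes continuous, strictly increasing functions $\mathbb{R}_{\ge0}\to\mathbb{R}_{\ge0}$ vanishing at $0$. *)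

theory Defs
  imports "HOL-Analysis.Analysis"
begin

primrec traj :: "('x \<Rightarrow> 'u \<Rightarrow> 'x) \<Rightarrow> ('x \<Rightarrow> 'u) \<Rightarrow> 'x \<Rightarrow> nat \<Rightarrow> 'x" where
  "traj f \<pi> x0 0 = x0"
| "traj f \<pi> x0 (Suc k) = f (traj f \<pi> x0 k) (\<pi> (traj f \<pi> x0 k))"

definition Zset :: "('x \<Rightarrow> 'u \<Rightarrow> real^'m) \<Rightarrow> ('x \<times> 'u) set" where
  "Zset h = {(x, u). h x u \<le> 0}"

definition X0set :: "('x \<Rightarrow> 'u \<Rightarrow> 'x) \<Rightarrow> ('x \<Rightarrow> 'u \<Rightarrow> real^'m) \<Rightarrow> 'x set" where
  "X0set f h = {x0. \<exists>\<pi>. \<forall>k. h (traj f \<pi> x0 k) (\<pi> (traj f \<pi> x0 k)) \<le> 0}"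

definition Pol :: "('x \<Rightarrow> 'u \<Rightarrow> 'x) \<Rightarrow> ('x \<Rightarrow> 'u \<Rightarrow> real^'m) \<Rightarrow> ('x \<Rightarrow> 'u) set" where
  "Pol f h = {\<pi>. \<forall>x0 \<in> X0set f h. \<forall>k. h (traj f \<pi> x0 k) (\<pi> (traj f \<pi> x0 k)) \<le> 0}"

definition Lbar :: "('x \<Rightarrow> 'u \<Rightarrow> real^'m) \<Rightarrow> ('x \<Rightarrow> 'u \<Rightarrow> real) \<Rightarrow> 'x \<Rightarrow> 'u \<Rightarrow> ereal" where
  "Lbar h L x u = (if h x u \<le> 0 then ereal (L x u) else \<infinity>)"

definition total_cost :: "('x \<Rightarrow> 'u \<Rightarrow> 'x) \<Rightarrow> (nat \<Rightarrow> 'x \<Rightarrow> 'u \<Rightarrow> ereal) \<Rightarrow> ('x \<Rightarrow> 'u) \<Rightarrow> 'x \<Rightarrow> ereal" where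
  "total_cost f c \<pi> x0 =
     liminf (\<lambda>N. \<Sum>k<N. c k (traj f \<pi> x0 k) (\<pi> (traj f \<pi> x0 k)))"

definition disc_cost :: "('x \<Rightarrow> 'u \<Rightarrow> 'x) \<Rightarrow> ('x \<Rightarrow> 'u \<Rightarrow> real^'m) \<Rightarrow> ('x \<Rightarrow> 'u \<Rightarrow> real) \<Rightarrow> real
     \<Rightarrow> ('x \<Rightarrow> 'u) \<Rightarrow> 'x \<Rightarrow> ereal" where
  "disc_cost f h L \<gamma> \<pi> x0 = total_cost f (\<lambda>k x u. ereal (\<gamma> ^ k) * Lbar h L x u) \<pi> x0"

definition Vstar :: "('x \<Rightarrow> 'u \<Rightarrow> 'x) \<Rightarrow> ('x \<Rightarrow> 'u \<Rightarrow> real^'m) \<Rightarrow> ('x \<Rightarrow> 'u \<Rightarrow> real) \<Rightarrow> real \<Rightarrow> 'x \<Rightarrow> ereal" where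
  "Vstar f h L \<gamma> x0 = (INF \<pi> \<in> Pol f h. disc_cost f h L \<gamma> \<pi> x0)"

definition Ltilde :: "('x \<Rightarrow> 'u \<Rightarrow> 'x) \<Rightarrow> ('x \<Rightarrow> 'u \<Rightarrow> real^'m) \<Rightarrow> ('x \<Rightarrow> 'u \<Rightarrow> real) \<Rightarrow> real \<Rightarrow> 'x \<Rightarrow> 'u \<Rightarrow> ereal" where
  "Ltilde f h L \<gamma> x u = Lbar h L x u + ereal (\<gamma> - 1) * Vstar f h L \<gamma> (f x u)"

definition undisc_cost :: "('x \<Rightarrow> 'u \<Rightarrow> 'x) \<Rightarrow> ('x \<Rightarrow> 'u \<Rightarrow> real^'m) \<Rightarrow> ('x \<Rightarrow> 'u \<Rightarrow> real) \<Rightarrow> real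
     \<Rightarrow> ('x \<Rightarrow> 'u) \<Rightarrow> 'x \<Rightarrow> ereal" where
  "undisc_cost f h L \<gamma> \<pi> x0 = total_cost f (\<lambda>k. Ltilde f h L \<gamma>) \<pi> x0"

definition Vtilde :: "('x \<Rightarrow> 'u \<Rightarrow> 'x) \<Rightarrow> ('x \<Rightarrow> 'u \<Rightarrow> real^'m) \<Rightarrow> ('x \<Rightarrow> 'u \<Rightarrow> real) \<Rightarrow> real \<Rightarrow> 'x \<Rightarrow> ereal" where
  "Vtilde f h L \<gamma> x0 = (INF \<pi> \<in> Pol f h. undisc_cost f h L \<gamma> \<pi> x0)"

definition classK :: "(real \<Rightarrow> real) \<Rightarrow> bool" where
  "classK \<rho> \<longleftrightarrow> continuous_on {0..} \<rho> \<and> strict_mono_on {0..} \<rho> \<and> \<rho> 0 = 0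
      \<and> (\<forall>t \<ge> 0. \<rho> t \<ge> 0)"

end

theory Submission
  imports Defs
begin

(* Along any feasible trajectory the Bellman inequality V x <= L x u + gamma V (f x u) says that
   the rotated stage cost L~ = L + (gamma - 1) V o f dominates V x - V (f x u), with equality
   along the optimal policy, so the first N rotated costs sum to at least V x0 - V x_N.
   Dissipativity (ii) bounds the same partial sums below by sum_k rho |x_k - xs| - 2 sup |lambda|.
   Hence either these rho-sums stay bounded, the trajectory converges to xs and V x_N -> V xs = 0,
   or the partial sums are unbounded above; in both cases the undiscounted cost is at least
   V x0. Along the optimal policy the partial sums V x0 - V x_N are bounded, which forces the
   first case and equality. That V xs = 0 follows from dissipativity (i), which bounds every
   discounted cost from xs below by - lambda xs, and from the policy resting at the steady state. *)

lemma traj_add: "traj f \<pi> (traj f \<pi> x k) j = traj f \<pi> x (j + k)"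
  by (induction j) auto

lemma traj_Suc_shift: "traj f \<pi> (f x (\<pi> x)) j = traj f \<pi> x (Suc j)"
  using traj_add[of f \<pi> x 1 j] by simp

lemma traj_fixpoint: "f x (\<pi> x) = x \<Longrightarrow> traj f \<pi> x k = x"
  by (induction k) auto

lemma Lbar_feasible: "h x u \<le> 0 \<Longrightarrow> Lbar h L x u = ereal (L x u)"
  by (simp add: Lbar_def)

lemma Pol_feasible:
  "\<pi> \<in> Pol f h \<Longrightarrow> x \<in> X0set f h \<Longrightarrow> h (traj f \<pi> x k) (\<pi> (traj f \<pi> x k)) \<le> 0"
  unfolding Pol_def by blast

lemma traj_in_X0set:
  assumes "\<pi> \<in> Pol f h" "x \<in> X0set f h"
  shows "traj f \<pi> x k \<in> X0set f h"
  unfolding X0set_def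
  by (intro CollectI exI[of _ \<pi>]) (simp add: traj_add Pol_feasible[OF assms])

lemma steady_in_X0set: "f xs us = xs \<Longrightarrow> h xs us \<le> 0 \<Longrightarrow> xs \<in> X0set f h"
  unfolding X0set_def by (intro CollectI exI[of _ "\<lambda>_. us"]) (simp add: traj_fixpoint)

lemma Pol_redirect_steady:
  assumes \<pi>: "\<pi> \<in> Pol f h" and steady: "f xs us = xs" "h xs us \<le> 0"
  shows "(\<lambda>x. if x = xs then us else \<pi> x) \<in> Pol f h"
proof -
  define \<pi>' where "\<pi>' x = (if x = xs then us else \<pi> x)" for x
  have traj_cases: "traj f \<pi>' x0 k = traj f \<pi> x0 k \<or> traj f \<pi>' x0 k = xs" for x0 k
    by (induction k) (auto simp: \<pi>'_def steady)
  have "h (traj f \<pi>' x0 k) (\<pi>' (traj f \<pi>' x0 k)) \<le> 0" if "x0 \<in> X0set f h" for x0 k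
    using traj_cases[of x0 k] Pol_feasible[OF \<pi> that, of k] steady by (auto simp: \<pi>'_def)
  then show ?thesis
    unfolding Pol_def \<pi>'_def by blast
qed

lemma disc_cost_feasible:
  assumes "\<pi> \<in> Pol f h" "x0 \<in> X0set f h"
  shows "disc_cost f h L \<gamma> \<pi> x0 =
           liminf (\<lambda>N. ereal (\<Sum>k<N. \<gamma> ^ k * L (traj f \<pi> x0 k) (\<pi> (traj f \<pi> x0 k))))"
  unfolding disc_cost_def total_cost_def
  by (simp add: Lbar_feasible Pol_feasible[OF assms])

lemma disc_cost_step:
  assumes "0 \<le> \<gamma>" "\<pi> \<in> Pol f h" "x \<in> X0set f h"
  shows "disc_cost f h L \<gamma> \<pi> x =
           ereal (L x (\<pi> x)) + ereal \<gamma> * disc_cost f h L \<gamma> \<pi> (f x (\<pi> x))"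
proof -
  define D where "D z N = (\<Sum>k<N. \<gamma> ^ k * L (traj f \<pi> z k) (\<pi> (traj f \<pi> z k)))" for z N
  let ?x1 = "f x (\<pi> x)"
  have x1: "?x1 \<in> X0set f h"
    using traj_in_X0set[OF assms(2,3), of 1] by simp
  have D_Suc: "D x (Suc N) = L x (\<pi> x) + \<gamma> * D ?x1 N" for N
    unfolding D_def sum.lessThan_Suc_shift
    by (simp add: traj_Suc_shift sum_distrib_left mult.assoc)
  have "disc_cost f h L \<gamma> \<pi> x = liminf (\<lambda>N. ereal (D x N))"
    unfolding D_def by (rule disc_cost_feasible[OF assms(2,3)])
  also have "\<dots> = liminf (\<lambda>N. ereal (D x (N + 1)))"
    by (rule liminf_shift[symmetric])
  also have "\<dots> = liminf (\<lambda>N. ereal (L x (\<pi> x)) + ereal \<gamma> * ereal (D ?x1 N))"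
    by (simp add: D_Suc)
  also have "\<dots> = ereal (L x (\<pi> x)) + liminf (\<lambda>N. ereal \<gamma> * ereal (D ?x1 N))"
    by (rule Liminf_add_ereal_left) auto
  also have "\<dots> = ereal (L x (\<pi> x)) + ereal \<gamma> * liminf (\<lambda>N. ereal (D ?x1 N))"
    by (subst Liminf_ereal_mult_left) (use assms(1) in auto)
  also have "liminf (\<lambda>N. ereal (D ?x1 N)) = disc_cost f h L \<gamma> \<pi> ?x1"
    unfolding D_def by (rule disc_cost_feasible[OF assms(2) x1, symmetric])
  finally show ?thesis .
qed

lemma Vstar_optimal_step:
  assumes "0 \<le> \<gamma>" and \<pi>: "\<pi> \<in> Pol f h"
    and optimal: "\<And>x. x \<in> X0set f h \<Longrightarrow> disc_cost f h L \<gamma> \<pi> x = Vstar f h L \<gamma> x"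
    and x: "x \<in> X0set f h"
  shows "Vstar f h L \<gamma> x = ereal (L x (\<pi> x)) + ereal \<gamma> * Vstar f h L \<gamma> (f x (\<pi> x))"
  using disc_cost_step[OF assms(1) \<pi> x] optimal[OF x]
    optimal[OF traj_in_X0set[OF \<pi> x, of 1]] by simp

lemma disc_cost_ge_neg_storage:
  assumes \<gamma>: "0 \<le> \<gamma>" "\<gamma> < 1" and \<pi>: "\<pi> \<in> Pol f h" and x0: "x0 \<in> X0set f h"
    and dissip: "\<And>x u. (x, u) \<in> Zset h \<Longrightarrow> 0 \<le> L x u + lam x - \<gamma> * lam (f x u)"
    and lam_bound: "\<And>x. x \<in> X0set f h \<Longrightarrow> \<bar>lam x\<bar> \<le> B"
  shows "- ereal (lam x0) \<le> disc_cost f h L \<gamma> \<pi> x0"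
proof -
  define y where "y = traj f \<pi> x0"
  define D where "D N = (\<Sum>k<N. \<gamma> ^ k * L (y k) (\<pi> (y k)))" for N
  have step: "\<gamma> ^ Suc k * lam (y (Suc k)) - \<gamma> ^ k * lam (y k) \<le> \<gamma> ^ k * L (y k) (\<pi> (y k))" for k
  proof -
    have "0 \<le> L (y k) (\<pi> (y k)) + lam (y k) - \<gamma> * lam (y (Suc k))"
      using dissip Pol_feasible[OF \<pi> x0, of k] by (simp add: Zset_def y_def)
    then have "0 \<le> \<gamma> ^ k * (L (y k) (\<pi> (y k)) + lam (y k) - \<gamma> * lam (y (Suc k)))"
      using \<gamma>(1) by simp
    then show ?thesis
      by (simp add: algebra_simps)
  qed
  have D_lower: "- (\<gamma> ^ N * B) - lam x0 \<le> D N" for N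
  proof -
    have "(\<Sum>k<N. \<gamma> ^ Suc k * lam (y (Suc k)) - \<gamma> ^ k * lam (y k)) \<le> D N"
      unfolding D_def by (rule sum_mono) (rule step)
    moreover have "y 0 = x0"
      by (simp add: y_def)
    ultimately have "\<gamma> ^ N * lam (y N) - lam x0 \<le> D N"
      using sum_lessThan_telescope[of "\<lambda>k. \<gamma> ^ k * lam (y k)" N] by simp
    moreover have "- (\<gamma> ^ N * B) \<le> \<gamma> ^ N * lam (y N)"
      using mult_left_mono[OF abs_le_D2[OF lam_bound], of "y N" "\<gamma> ^ N"] \<gamma>(1)
        traj_in_X0set[OF \<pi> x0] by (simp add: y_def)
    ultimately show ?thesis
      by linarith
  qed
  have "(\<lambda>N. - (\<gamma> ^ N * B) - lam x0) \<longlonglongrightarrow> - (0 * B) - lam x0"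
    by (intro tendsto_intros LIMSEQ_power_zero) (use \<gamma> in auto)
  then have "liminf (\<lambda>N. ereal (- (\<gamma> ^ N * B) - lam x0)) = ereal (- lam x0)"
    by (intro lim_imp_Liminf tendsto_ereal) auto
  then have "- ereal (lam x0) = liminf (\<lambda>N. ereal (- (\<gamma> ^ N * B) - lam x0))"
    by simp
  also have "\<dots> \<le> liminf (\<lambda>N. ereal (D N))"
    by (intro Liminf_mono) (simp add: D_lower)
  also have "\<dots> = disc_cost f h L \<gamma> \<pi> x0"
    unfolding D_def y_def by (rule disc_cost_feasible[OF \<pi> x0, symmetric])
  finally show ?thesis .
qed

lemma Vstar_steady_eq_0:
  assumes \<gamma>: "0 \<le> \<gamma>" "\<gamma> < 1" and \<pi>: "\<pi> \<in> Pol f h"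
    and steady: "f xs us = xs" "h xs us \<le> 0" "L xs us = 0" and lam_xs: "lam xs = 0"
    and dissip: "\<And>x u. (x, u) \<in> Zset h \<Longrightarrow> 0 \<le> L x u + lam x - \<gamma> * lam (f x u)"
    and lam_bound: "\<And>x. x \<in> X0set f h \<Longrightarrow> \<bar>lam x\<bar> \<le> B"
  shows "Vstar f h L \<gamma> xs = 0"
proof (rule antisym)
  let ?\<pi>_stay = "\<lambda>x. if x = xs then us else \<pi> x"
  have "Vstar f h L \<gamma> xs \<le> disc_cost f h L \<gamma> ?\<pi>_stay xs"
    unfolding Vstar_def by (rule INF_lower) (rule Pol_redirect_steady[OF \<pi> steady(1,2)])
  also have "\<dots> = 0"
  proof -
    have "traj f ?\<pi>_stay xs k = xs" for k
      by (rule traj_fixpoint) (simp add: steady)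
    then show ?thesis
      unfolding disc_cost_def total_cost_def
      by (simp add: steady Lbar_feasible Liminf_const flip: zero_ereal_def)
  qed
  finally show "Vstar f h L \<gamma> xs \<le> 0" .
  show "0 \<le> Vstar f h L \<gamma> xs"
    unfolding Vstar_def
  proof (rule INF_greatest)
    fix \<pi>' assume "\<pi>' \<in> Pol f h"
    have "- ereal (lam xs) \<le> disc_cost f h L \<gamma> \<pi>' xs"
      by (rule disc_cost_ge_neg_storage[where lam = lam and B = B])
        (use \<gamma> \<open>\<pi>' \<in> Pol f h\<close> steady_in_X0set[of f xs us h] steady dissip lam_bound in auto)
    then show "0 \<le> disc_cost f h L \<gamma> \<pi>' xs"
      by (simp add: lam_xs flip: zero_ereal_def)
  qed
qed

lemma classK_nonneg: "classK \<rho> \<Longrightarrow> 0 \<le> t \<Longrightarrow> 0 \<le> \<rho> t"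
  by (simp add: classK_def)

lemma classK_less_iff: "classK \<rho> \<Longrightarrow> 0 \<le> s \<Longrightarrow> 0 \<le> t \<Longrightarrow> \<rho> s < \<rho> t \<longleftrightarrow> s < t"
  using strict_mono_on_less[of "{0..}" \<rho> s t] by (simp add: classK_def)

lemma LIMSEQ_if_classK_sums_bounded:
  fixes y :: "nat \<Rightarrow> 'a::real_normed_vector"
  assumes K: "classK \<rho>" and bounded: "\<And>N. (\<Sum>k<N. \<rho> (norm (y k - c))) \<le> B"
  shows "y \<longlonglongrightarrow> c"
proof -
  have "summable (\<lambda>k. \<rho> (norm (y k - c)))"
    using bounded by (intro summableI_nonneg_bounded) (auto intro: classK_nonneg[OF K])
  then have \<rho>_lim: "(\<lambda>k. \<rho> (norm (y k - c))) \<longlonglongrightarrow> 0"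
    by (rule summable_LIMSEQ_zero)
  show ?thesis
    unfolding tendsto_iff dist_norm
  proof (intro allI impI)
    fix e :: real
    assume "0 < e"
    then have "0 < \<rho> e"
      using classK_less_iff[OF K, of 0 e] K by (simp add: classK_def)
    with \<rho>_lim have "eventually (\<lambda>k. \<rho> (norm (y k - c)) < \<rho> e) sequentially"
      by (rule order_tendstoD(2))
    then show "eventually (\<lambda>k. norm (y k - c) < e) sequentially"
    proof eventually_elim
      fix k
      assume "\<rho> (norm (y k - c)) < \<rho> e"
      then show "norm (y k - c) < e"
        using classK_less_iff[OF K, of "norm (y k - c)" e] \<open>0 < e\<close> by simp
    qed
  qed
qed

lemma sum_le_sum_plus_bounded_storage:
  fixes g l T :: "nat \<Rightarrow> real"
  assumes dissip: "\<And>k. g k + l (Suc k) - l k \<le> T k" and l_bound: "\<And>k. \<bar>l k\<bar> \<le> B"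
  shows "(\<Sum>k<N. g k) \<le> (\<Sum>k<N. T k) + 2 * B"
proof -
  have "(\<Sum>k<N. g k + (l (Suc k) - l k)) \<le> (\<Sum>k<N. T k)"
    using dissip by (intro sum_mono) (simp add: algebra_simps)
  then have "(\<Sum>k<N. g k) + (l N - l 0) \<le> (\<Sum>k<N. T k)"
    by (simp add: sum.distrib sum_lessThan_telescope)
  then show ?thesis
    using l_bound[of N] l_bound[of 0] by linarith
qed

lemma liminf_sum_ge_by_dissipation:
  fixes y :: "nat \<Rightarrow> 'a::real_normed_vector" and T v l :: "nat \<Rightarrow> real"
  assumes K: "classK \<rho>"
    and value_decrease: "\<And>k. v k - v (Suc k) \<le> T k"
    and dissip: "\<And>k. \<rho> (norm (y k - c)) + l (Suc k) - l k \<le> T k"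
    and l_bound: "\<And>k. \<bar>l k\<bar> \<le> B"
    and v_lim: "y \<longlonglongrightarrow> c \<Longrightarrow> v \<longlonglongrightarrow> 0"
  shows "ereal (v 0) \<le> liminf (\<lambda>N. ereal (\<Sum>k<N. T k))"
proof (cases "\<exists>C. \<forall>N. (\<Sum>k<N. \<rho> (norm (y k - c))) \<le> C")
  case True
  then have "v \<longlonglongrightarrow> 0"
    using LIMSEQ_if_classK_sums_bounded[OF K] v_lim by blast
  then have "ereal (v 0) = liminf (\<lambda>N. ereal (v 0 - v N))"
    by (intro lim_imp_Liminf[symmetric] tendsto_ereal) (auto intro!: tendsto_eq_intros)
  also have "\<dots> \<le> liminf (\<lambda>N. ereal (\<Sum>k<N. T k))"
  proof (intro Liminf_mono always_eventually allI)
    fix N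
    have "(\<Sum>k<N. v k - v (Suc k)) \<le> (\<Sum>k<N. T k)"
      by (intro sum_mono value_decrease)
    then show "ereal (v 0 - v N) \<le> ereal (\<Sum>k<N. T k)"
      by (simp add: sum_lessThan_telescope')
  qed
  finally show ?thesis .
next
  case False
  then obtain N0 where N0: "v 0 + 2 * B < (\<Sum>k<N0. \<rho> (norm (y k - c)))"
    by (meson not_le)
  have "ereal (v 0) \<le> ereal (\<Sum>k<N. T k)" if "N0 \<le> N" for N
  proof -
    have "(\<Sum>k<N0. \<rho> (norm (y k - c))) \<le> (\<Sum>k<N. \<rho> (norm (y k - c)))"
      using that by (intro sum_mono2) (auto intro: classK_nonneg[OF K])
    then show ?thesis
      using N0 sum_le_sum_plus_bounded_storage[where g = "\<lambda>k. \<rho> (norm (y k - c))", OF dissip l_bound, of N]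
      by simp
  qed
  then have "eventually (\<lambda>N. ereal (v 0) \<le> ereal (\<Sum>k<N. T k)) sequentially"
    unfolding eventually_sequentially by blast
  then show ?thesis
    by (rule Liminf_bounded)
qed

lemma sum_LIMSEQ_by_dissipation:
  fixes y :: "nat \<Rightarrow> 'a::real_normed_vector" and T v l :: "nat \<Rightarrow> real"
  assumes K: "classK \<rho>"
    and value_eq: "\<And>k. T k = v k - v (Suc k)"
    and dissip: "\<And>k. \<rho> (norm (y k - c)) + l (Suc k) - l k \<le> T k"
    and l_bound: "\<And>k. \<bar>l k\<bar> \<le> B"
    and v_bound: "\<And>k. \<bar>v k\<bar> \<le> M"
    and v_lim: "y \<longlonglongrightarrow> c \<Longrightarrow> v \<longlonglongrightarrow> 0"
  shows "(\<lambda>N. \<Sum>k<N. T k) \<longlonglongrightarrow> v 0"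
proof -
  have sum_T: "(\<Sum>k<N. T k) = v 0 - v N" for N
    by (simp add: value_eq sum_lessThan_telescope')
  have "(\<Sum>k<N. \<rho> (norm (y k - c))) \<le> 2 * M + 2 * B" for N
    using sum_le_sum_plus_bounded_storage[where g = "\<lambda>k. \<rho> (norm (y k - c))", OF dissip l_bound, of N]
      sum_T[of N] v_bound[of 0] v_bound[of N] by (simp add: abs_le_iff)
  then have "v \<longlonglongrightarrow> 0"
    using LIMSEQ_if_classK_sums_bounded[OF K] v_lim by blast
  then show ?thesis
    unfolding sum_T by (auto intro!: tendsto_eq_intros)
qed

locale rotated_dissipativity =
  fixes f :: "'x::real_normed_vector \<Rightarrow> 'u \<Rightarrow> 'x" and h :: "'x \<Rightarrow> 'u \<Rightarrow> real^'m"
    and L :: "'x \<Rightarrow> 'u \<Rightarrow> real" and \<gamma> :: real and xs :: 'x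
    and v lam :: "'x \<Rightarrow> real" and \<rho> :: "real \<Rightarrow> real" and B :: real
  assumes V_finite: "\<And>x. x \<in> X0set f h \<Longrightarrow> Vstar f h L \<gamma> x = ereal (v x)"
    and V_cont: "isCont (Vstar f h L \<gamma>) xs" and V_steady: "Vstar f h L \<gamma> xs = 0"
    and K: "classK \<rho>"
    and lam_bound: "\<And>x. x \<in> X0set f h \<Longrightarrow> \<bar>lam x\<bar> \<le> B"
    and dissip: "\<And>x u. (x, u) \<in> Zset h \<Longrightarrow>
                 ereal (L x u + lam x - lam (f x u)) + ereal (\<gamma> - 1) * Vstar f h L \<gamma> (f x u)
                   \<ge> ereal (\<rho> (norm (x - xs)))"
begin

lemma rotated_cost_along_traj_ge:
  assumes \<pi>: "\<pi> \<in> Pol f h" and x0: "x0 \<in> X0set f h"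
  shows "\<rho> (norm (traj f \<pi> x0 k - xs)) + lam (traj f \<pi> x0 (Suc k)) - lam (traj f \<pi> x0 k)
           \<le> L (traj f \<pi> x0 k) (\<pi> (traj f \<pi> x0 k)) + (\<gamma> - 1) * v (traj f \<pi> x0 (Suc k))"
proof -
  let ?x = "traj f \<pi> x0 k" and ?u = "\<pi> (traj f \<pi> x0 k)"
  have "(?x, ?u) \<in> Zset h"
    using Pol_feasible[OF \<pi> x0] by (simp add: Zset_def)
  moreover have "f ?x ?u \<in> X0set f h"
    using traj_in_X0set[OF \<pi> x0, of "Suc k"] by simp
  ultimately show ?thesis
    using dissip[of ?x ?u] V_finite[of "f ?x ?u"] by simp
qed

lemma v_LIMSEQ_zero:
  assumes "y \<longlonglongrightarrow> xs" "\<And>k. y k \<in> X0set f h"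
  shows "(\<lambda>k. v (y k)) \<longlonglongrightarrow> 0"
proof -
  have "(\<lambda>k. Vstar f h L \<gamma> (y k)) \<longlonglongrightarrow> Vstar f h L \<gamma> xs"
    using isCont_tendsto_compose[OF V_cont assms(1)] .
  then have "(\<lambda>k. ereal (v (y k))) \<longlonglongrightarrow> ereal 0"
    by (simp add: V_finite assms(2) V_steady zero_ereal_def)
  then show ?thesis
    by simp
qed

lemma undisc_cost_feasible:
  assumes \<pi>: "\<pi> \<in> Pol f h" and x0: "x0 \<in> X0set f h"
  shows "undisc_cost f h L \<gamma> \<pi> x0 =
           liminf (\<lambda>N. ereal (\<Sum>k<N. L (traj f \<pi> x0 k) (\<pi> (traj f \<pi> x0 k))
                                      + (\<gamma> - 1) * v (traj f \<pi> x0 (Suc k))))"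
proof -
  have "Ltilde f h L \<gamma> (traj f \<pi> x0 k) (\<pi> (traj f \<pi> x0 k)) =
          ereal (L (traj f \<pi> x0 k) (\<pi> (traj f \<pi> x0 k)) + (\<gamma> - 1) * v (traj f \<pi> x0 (Suc k)))" for k
  proof -
    have "h (traj f \<pi> x0 k) (\<pi> (traj f \<pi> x0 k)) \<le> 0"
      by (rule Pol_feasible[OF \<pi> x0])
    moreover have "f (traj f \<pi> x0 k) (\<pi> (traj f \<pi> x0 k)) \<in> X0set f h"
      using traj_in_X0set[OF \<pi> x0, of "Suc k"] by simp
    ultimately show ?thesis
      by (simp add: Ltilde_def Lbar_feasible V_finite)
  qed
  then show ?thesis
    unfolding undisc_cost_def total_cost_def by simp
qed

lemma Vstar_le_undisc_cost:
  assumes bellman: "\<And>x. Vstar f h L \<gamma> x =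
             (INF \<pi> \<in> Pol f h. Lbar h L x (\<pi> x) + ereal \<gamma> * Vstar f h L \<gamma> (f x (\<pi> x)))"
    and \<pi>: "\<pi> \<in> Pol f h" and x0: "x0 \<in> X0set f h"
  shows "Vstar f h L \<gamma> x0 \<le> undisc_cost f h L \<gamma> \<pi> x0"
proof -
  define y where "y = traj f \<pi> x0"
  define T where "T k = L (y k) (\<pi> (y k)) + (\<gamma> - 1) * v (y (Suc k))" for k
  have y_X0: "y k \<in> X0set f h" for k
    unfolding y_def by (rule traj_in_X0set[OF \<pi> x0])
  have y_Z: "(y k, \<pi> (y k)) \<in> Zset h" for k
    using Pol_feasible[OF \<pi> x0] by (simp add: Zset_def y_def)
  have y_Suc: "y (Suc k) = f (y k) (\<pi> (y k))" for k
    by (simp add: y_def)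
  have "v (y k) - v (y (Suc k)) \<le> T k" for k
  proof -
    have "Vstar f h L \<gamma> (y k)
            \<le> Lbar h L (y k) (\<pi> (y k)) + ereal \<gamma> * Vstar f h L \<gamma> (f (y k) (\<pi> (y k)))"
      by (subst bellman) (rule INF_lower[OF \<pi>])
    then have "ereal (v (y k)) \<le> ereal (L (y k) (\<pi> (y k))) + ereal \<gamma> * ereal (v (y (Suc k)))"
      using y_Z[of k] by (simp add: V_finite y_X0 Lbar_feasible Zset_def flip: y_Suc)
    then show ?thesis
      by (simp add: T_def algebra_simps)
  qed
  moreover have "\<rho> (norm (y k - xs)) + lam (y (Suc k)) - lam (y k) \<le> T k" for k
    unfolding T_def y_def by (rule rotated_cost_along_traj_ge[OF \<pi> x0])
  ultimately have "ereal (v (y 0)) \<le> liminf (\<lambda>N. ereal (\<Sum>k<N. T k))"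
    using lam_bound y_X0 v_LIMSEQ_zero
    by (intro liminf_sum_ge_by_dissipation[OF K, where y = y and l = "\<lambda>k. lam (y k)" and B = B]) auto
  then show ?thesis
    using undisc_cost_feasible[OF \<pi> x0] V_finite[OF x0] by (simp add: T_def y_def)
qed

lemma undisc_cost_eq_Vstar:
  assumes optimal_step: "\<And>x. x \<in> X0set f h \<Longrightarrow>
             Vstar f h L \<gamma> x = ereal (L x (\<pi> x)) + ereal \<gamma> * Vstar f h L \<gamma> (f x (\<pi> x))"
    and v_bound: "\<And>x. x \<in> X0set f h \<Longrightarrow> \<bar>v x\<bar> \<le> M"
    and \<pi>: "\<pi> \<in> Pol f h" and x0: "x0 \<in> X0set f h"
  shows "undisc_cost f h L \<gamma> \<pi> x0 = Vstar f h L \<gamma> x0"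
proof -
  define y where "y = traj f \<pi> x0"
  define T where "T k = L (y k) (\<pi> (y k)) + (\<gamma> - 1) * v (y (Suc k))" for k
  have y_X0: "y k \<in> X0set f h" for k
    unfolding y_def by (rule traj_in_X0set[OF \<pi> x0])
  have y_Suc: "y (Suc k) = f (y k) (\<pi> (y k))" for k
    by (simp add: y_def)
  have "T k = v (y k) - v (y (Suc k))" for k
  proof -
    have "ereal (v (y k)) = ereal (L (y k) (\<pi> (y k))) + ereal \<gamma> * ereal (v (y (Suc k)))"
      using optimal_step[OF y_X0[of k]] by (simp add: V_finite y_X0 flip: y_Suc)
    then show ?thesis
      by (simp add: T_def algebra_simps)
  qed
  moreover have "\<rho> (norm (y k - xs)) + lam (y (Suc k)) - lam (y k) \<le> T k" for k
    unfolding T_def y_def by (rule rotated_cost_along_traj_ge[OF \<pi> x0])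
  ultimately have "(\<lambda>N. \<Sum>k<N. T k) \<longlonglongrightarrow> v (y 0)"
    using lam_bound v_bound y_X0 v_LIMSEQ_zero
    by (intro sum_LIMSEQ_by_dissipation[OF K, where y = y and l = "\<lambda>k. lam (y k)" and B = B and M = M])
      auto
  then have "liminf (\<lambda>N. ereal (\<Sum>k<N. T k)) = ereal (v x0)"
    by (intro lim_imp_Liminf tendsto_ereal) (simp_all add: y_def)
  then show ?thesis
    using undisc_cost_feasible[OF \<pi> x0] V_finite[OF x0] by (simp add: T_def y_def)
qed

end

theorem theorem3:
  fixes f :: "real^'nx \<Rightarrow> real^'nu \<Rightarrow> real^'nx"
    and h :: "real^'nx \<Rightarrow> real^'nu \<Rightarrow> real^'m"
    and L :: "real^'nx \<Rightarrow> real^'nu \<Rightarrow> real"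
    and \<gamma> :: real
    and xs :: "real^'nx" and us :: "real^'nu"
    and lam :: "real^'nx \<Rightarrow> real" and \<rho> :: "real \<Rightarrow> real"
    and \<pi>s :: "real^'nx \<Rightarrow> real^'nu"
  assumes gamma: "0 < \<gamma>" "\<gamma> < 1"
    and steady: "f xs us = xs" "h xs us \<le> 0" "L xs us = 0"
    and A1: "compact (Zset h)" "compact (X0set f h)"
    and A2_lambda: "isCont lam xs" "\<And>S. bounded S \<Longrightarrow> bounded (lam ` S)" "lam xs = 0"
    and A2_rho: "classK \<rho>"
    and A2_i: "\<And>x u. (x, u) \<in> Zset h \<Longrightarrow>
                 L x u + lam x - \<gamma> * lam (f x u) \<ge> \<rho> (norm (x - xs))"
    and A2_ii: "\<And>x u. (x, u) \<in> Zset h \<Longrightarrow>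
                 ereal (L x u + lam x - lam (f x u)) + ereal (\<gamma> - 1) * Vstar f h L \<gamma> (f x u)
                   \<ge> ereal (\<rho> (norm (x - xs)))"
    and A3: "isCont (Vstar f h L \<gamma>) xs" "\<exists>M. \<forall>x \<in> X0set f h. \<bar>Vstar f h L \<gamma> x\<bar> \<le> ereal M"
    and opt: "\<pi>s \<in> Pol f h" "\<And>x0. x0 \<in> X0set f h \<Longrightarrow> disc_cost f h L \<gamma> \<pi>s x0 = Vstar f h L \<gamma> x0"
    and bellman: "\<And>x. Vstar f h L \<gamma> x =
                   (INF \<pi> \<in> Pol f h. Lbar h L x (\<pi> x) + ereal \<gamma> * Vstar f h L \<gamma> (f x (\<pi> x)))"
  shows "\<forall>x0 \<in> X0set f h.
           undisc_cost f h L \<gamma> \<pi>s x0 = Vtilde f h L \<gamma> x0 \<and> Vtilde f h L \<gamma> x0 = Vstar f h L \<gamma> x0"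
proof -
  obtain B where lam_bound: "\<And>x. x \<in> X0set f h \<Longrightarrow> \<bar>lam x\<bar> \<le> B"
    using A2_lambda(2)[OF compact_imp_bounded[OF A1(2)]] unfolding bounded_iff by auto
  obtain M where V_bound: "\<And>x. x \<in> X0set f h \<Longrightarrow> \<bar>Vstar f h L \<gamma> x\<bar> \<le> ereal M"
    using A3(2) by blast
  define v where "v x = real_of_ereal (Vstar f h L \<gamma> x)" for x
  have V_finite: "Vstar f h L \<gamma> x = ereal (v x)" if "x \<in> X0set f h" for x
    using V_bound[OF that] unfolding v_def by (cases "Vstar f h L \<gamma> x") auto
  have v_bound: "\<bar>v x\<bar> \<le> M" if "x \<in> X0set f h" for x
    using V_bound[OF that] V_finite[OF that] by simp
  have dissip_nonneg: "0 \<le> L x u + lam x - \<gamma> * lam (f x u)" if "(x, u) \<in> Zset h" for x u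
    using A2_i[OF that] classK_nonneg[OF A2_rho, of "norm (x - xs)"] by simp
  have V_steady: "Vstar f h L \<gamma> xs = 0"
    using gamma opt(1) steady A2_lambda(3) dissip_nonneg lam_bound
    by (intro Vstar_steady_eq_0[where lam = lam and B = B and \<pi> = \<pi>s]) auto
  have optimal_step: "\<And>x. x \<in> X0set f h \<Longrightarrow>
          Vstar f h L \<gamma> x = ereal (L x (\<pi>s x)) + ereal \<gamma> * Vstar f h L \<gamma> (f x (\<pi>s x))"
    using Vstar_optimal_step[OF _ opt] gamma(1) by simp
  interpret rotated_dissipativity f h L \<gamma> xs v lam \<rho> B
    by unfold_locales (fact V_finite A3(1) V_steady A2_rho lam_bound A2_ii)+
  show ?thesis
  proof
    fix x0
    assume x0: "x0 \<in> X0set f h"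
    have "Vstar f h L \<gamma> x0 \<le> Vtilde f h L \<gamma> x0"
      unfolding Vtilde_def using Vstar_le_undisc_cost[OF bellman _ x0] by (blast intro: INF_greatest)
    moreover have "Vtilde f h L \<gamma> x0 \<le> undisc_cost f h L \<gamma> \<pi>s x0"
      unfolding Vtilde_def by (rule INF_lower[OF opt(1)])
    ultimately show "undisc_cost f h L \<gamma> \<pi>s x0 = Vtilde f h L \<gamma> x0
                     \<and> Vtilde f h L \<gamma> x0 = Vstar f h L \<gamma> x0"
      using undisc_cost_eq_Vstar[OF optimal_step v_bound opt(1) x0] by auto
  qed
qed

end
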